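(* Let $n\ge 3$, let $F$ be a set of edges of $Q_n$, and let $T$ be a proper subset of the vertex set of $Q_n$ with $|T|\ge 3$ such that every edge of $Q_n$ joining a vertex of parity 0 in $T$ to a vertex outside $T$ belongs to $F$. If $|T|_0>|T|_1$, then $F$ is not minimal.
   Context: $Q_n$ is the $n$-dimensional hypercube on the binary strings of length $n$, two strings adjacent iff they differ in exactly one bit. The parity of a vertex is the number of ones in its label modulo 2. For a set $T$ of vertices, $|T|_0$ and $|T|_1$ denote the numbers of vertices of parity 0 and parity 1 in $T$. $F$ is a set of "faulty" edges; $Q_n-F$ is the graph with all vertices of $Q_n$ and the edges of $Q_n$ not in $F$. "$F$ is not minimal" means that there is a proper subset $F'\subsetneq F$ such that $Q_n-F'$ has no Hamiltonian cycle. *)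

theory Defs
  imports Main
begin

definition hc_verts :: "nat \<Rightarrow> bool list set" where
  "hc_verts n = {v. length v = n}"

definition hc_adj :: "bool list \<Rightarrow> bool list \<Rightarrow> bool" where
  "hc_adj u v \<longleftrightarrow> length u = length v \<and> card {i. i < length u \<and> u ! i \<noteq> v ! i} = 1"

definition hc_edges :: "nat \<Rightarrow> bool list set set" where
  "hc_edges n = {{u, v} | u v. u \<in> hc_verts n \<and> v \<in> hc_verts n \<and> hc_adj u v}"

definition parity :: "bool list \<Rightarrow> nat" where
  "parity v = count_list v True mod 2"

definition card_par :: "nat \<Rightarrow> bool list set \<Rightarrow> nat" where
  "card_par p T = card {v \<in> T. parity v = p}"

definition is_ham_cycle :: "'a set \<Rightarrow> 'a set set \<Rightarrow> 'a list \<Rightarrow> bool" where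
  "is_ham_cycle V E cs \<longleftrightarrow> distinct cs \<and> set cs = V \<and> length cs \<ge> 3 \<and>
     (\<forall>i < length cs. {cs ! i, cs ! ((i + 1) mod length cs)} \<in> E)"

definition hc_hamiltonian :: "nat \<Rightarrow> bool list set set \<Rightarrow> bool" where
  "hc_hamiltonian n F \<longleftrightarrow> (\<exists>cs. is_ham_cycle (hc_verts n) (hc_edges n - F) cs)"

definition not_minimal :: "nat \<Rightarrow> bool list set set \<Rightarrow> bool" where
  "not_minimal n F \<longleftrightarrow> (\<exists>F'. F' \<subset> F \<and> \<not> hc_hamiltonian n F')"

end

theory Submission
  imports Defs
begin

text \<open>If \<open>|T|\<^sub>0 > |T|\<^sub>1\<close>, then counting the \<open>n\<close> neighbours of each even vertex of \<open>T\<close> shows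
  that some even \<open>u \<in> T\<close> has a neighbour \<open>v \<notin> T\<close>, and the edge \<open>uv\<close> lies in \<open>F\<close>.
  Put \<open>F' = F - {uv}\<close>. In a Hamiltonian cycle of \<open>Q\<^sub>n - F'\<close> both cycle neighbours of an even
  vertex of \<open>T\<close> are odd, hence lie in \<open>T\<close>, except for the single pair \<open>(u, v)\<close>. As every odd
  vertex is a cycle neighbour of at most two vertices, \<open>2 |T|\<^sub>0 - 1 \<le> 2 |T|\<^sub>1\<close>, a
  contradiction.\<close>

lemma finite_hc_verts: "finite (hc_verts n)"
  using finite_lists_length_eq[of "UNIV :: bool set" n] unfolding hc_verts_def by simp

lemma hc_adj_iff_flip: "hc_adj u v \<longleftrightarrow> (\<exists>k<length u. v = u[k := \<not> u!k])"
proof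
  assume adj: "hc_adj u v"
  then have len: "length u = length v" and "card {i. i < length u \<and> u ! i \<noteq> v ! i} = 1"
    unfolding hc_adj_def by auto
  then obtain k where k: "{i. i < length u \<and> u ! i \<noteq> v ! i} = {k}"
    using card_1_singletonE by blast
  then have "k < length u" "u!k \<noteq> v!k" by auto
  have "v = u[k := \<not> u!k]"
  proof (rule nth_equalityI)
    fix i assume "i < length v"
    with k len \<open>u!k \<noteq> v!k\<close> show "v!i = u[k := \<not> u!k] ! i" by (cases "i = k") auto
  qed (simp add: len)
  with k show "\<exists>k<length u. v = u[k := \<not> u!k]" by blast
next
  assume "\<exists>k<length u. v = u[k := \<not> u!k]"
  then obtain k where "k < length u" "v = u[k := \<not> u!k]" by blast
  then have "{i. i < length u \<and> u ! i \<noteq> v ! i} = {k}" by (auto simp: nth_list_update)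
  with \<open>v = u[k := \<not> u!k]\<close> show "hc_adj u v" unfolding hc_adj_def by simp
qed

lemma hc_adj_sym:
  assumes "hc_adj u v" shows "hc_adj v u"
proof -
  have len: "length u = length v" using assms unfolding hc_adj_def by simp
  then have "{i. i < length v \<and> v ! i \<noteq> u ! i} = {i. i < length u \<and> u ! i \<noteq> v ! i}" by auto
  with assms len show ?thesis unfolding hc_adj_def by argo
qed

lemma count_list_flip:
  assumes "k < length u"
  shows "count_list (u[k := \<not> u!k]) True + of_bool (u!k) = count_list u True + of_bool (\<not> u!k)"
proof -
  have u: "u = take k u @ u!k # drop (Suc k) u" using assms by (simp add: id_take_nth_drop)
  have "u[k := \<not> u!k] = take k u @ (\<not> u!k) # drop (Suc k) u"
    using assms by (simp add: upd_conv_take_nth_drop)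
  then show ?thesis by (subst (2) u) auto
qed

lemma parity_flip:
  assumes "k < length u"
  shows "parity (u[k := \<not> u!k]) = 1 - parity u"
  using count_list_flip[OF assms] unfolding parity_def by (cases "u!k") (simp_all, presburger+)

lemma parity_hc_adj: "hc_adj u v \<Longrightarrow> parity v = 1 - parity u"
  unfolding hc_adj_iff_flip using parity_flip by blast

lemma hc_edge_iff: "{a, b} \<in> hc_edges n \<longleftrightarrow> a \<in> hc_verts n \<and> b \<in> hc_verts n \<and> hc_adj a b"
  unfolding hc_edges_def by (auto simp: doubleton_eq_iff dest: hc_adj_sym)

lemma card_par_le_if_even_vertices_closed:
  assumes "0 < n" and T: "T \<subseteq> hc_verts n"
    and closed: "\<And>u v. u \<in> T \<Longrightarrow> parity u = 0 \<Longrightarrow> v \<in> hc_verts n \<Longrightarrow> hc_adj u v \<Longrightarrow> v \<in> T"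
  shows "card_par 0 T \<le> card_par 1 T"
proof -
  define T0 where "T0 = {v \<in> T. parity v = 0}"
  define T1 where "T1 = {v \<in> T. parity v = 1}"
  define flip where "flip = (\<lambda>(u :: bool list, k :: nat). (u[k := \<not> u!k], k))"
  have len: "\<And>u. u \<in> T \<Longrightarrow> length u = n" using T unfolding hc_verts_def by auto
  have "flip (u, k) \<in> T1 \<times> {..<n}" if u: "u \<in> T0" and k: "k < n" for u k
  proof -
    have "hc_adj u (u[k := \<not> u!k])" "u[k := \<not> u!k] \<in> hc_verts n"
      using u k len unfolding T0_def hc_adj_iff_flip hc_verts_def by auto
    moreover have "parity (u[k := \<not> u!k]) = 1" using u k len parity_flip unfolding T0_def by auto
    ultimately show ?thesis using closed u k unfolding flip_def T0_def T1_def by auto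
  qed
  then have "flip ` (T0 \<times> {..<n}) \<subseteq> T1 \<times> {..<n}" by blast
  moreover have "inj_on flip (T0 \<times> {..<n})"
  proof (rule inj_onI, clarify)
    fix u k w l assume "u \<in> T0" "k < n" "w \<in> T0" and eq: "flip (u, k) = flip (w, l)"
    then have "k = l" "k < length u" "k < length w" and flipped: "u[k := \<not> u!k] = w[k := \<not> w!k]"
      using len unfolding flip_def T0_def by auto
    have "u = (u[k := \<not> u!k])[k := \<not> u[k := \<not> u!k] ! k]"
      and "w = (w[k := \<not> w!k])[k := \<not> w[k := \<not> w!k] ! k]"
      using \<open>k < length u\<close> \<open>k < length w\<close> by simp_all
    with flipped \<open>k = l\<close> show "u = w \<and> k = l" by metis
  qed
  moreover have "finite (T1 \<times> {..<n})"
    using finite_subset[OF T finite_hc_verts] unfolding T1_def by simp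
  ultimately have "card (T0 \<times> {..<n}) \<le> card (T1 \<times> {..<n})"
    using card_inj_on_le by blast
  then have "card T0 * n \<le> card T1 * n" by (simp add: card_cartesian_product)
  then show ?thesis using \<open>0 < n\<close> unfolding card_par_def T0_def T1_def by simp
qed

lemma card_le_if_two_injections_almost_into:
  assumes "finite I" "finite J" "inj_on f I" "inj_on g I"
    and "card {i \<in> I. f i \<notin> J} + card {i \<in> I. g i \<notin> J} \<le> 1"
  shows "card I \<le> card J"
proof -
  have split: "card I = card {i \<in> I. h i \<in> J} + card {i \<in> I. h i \<notin> J}" for h :: "'a \<Rightarrow> 'b"
    using \<open>finite I\<close> by (subst card_Un_disjoint[symmetric]) (auto intro: arg_cong[where f = card])
  have into: "card {i \<in> I. h i \<in> J} \<le> card J" if "inj_on h I" for h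
    using that \<open>finite J\<close> by (intro card_inj_on_le[where f = h]) (auto intro: inj_on_subset)
  show ?thesis
    using split[of f] split[of g] into[OF \<open>inj_on f I\<close>] into[OF \<open>inj_on g I\<close>] assms(5) by linarith
qed

lemma cyclic_succ_pred: "(i :: nat) < L \<Longrightarrow> ((i + L - 1) mod L + 1) mod L = i"
  by (cases i) (auto simp: mod_Suc_eq)

lemma cyclic_pred_succ: "(i :: nat) < L \<Longrightarrow> ((i + 1) mod L + L - 1) mod L = i"
  by (cases "i + 1 = L") auto

lemma cyclic_succ_ne_pred: "(i :: nat) < L \<Longrightarrow> 3 \<le> L \<Longrightarrow> (i + 1) mod L \<noteq> (i + L - 1) mod L"
  by (cases "i + 1 = L"; cases i) (auto simp: mod_if)

lemma card_nth_positions: "distinct xs \<Longrightarrow> card {i. i < length xs \<and> xs ! i \<in> X} = card (X \<inter> set xs)"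
  using distinct_length_filter[of xs "\<lambda>x. x \<in> X"] length_filter_conv_card[of "\<lambda>x. x \<in> X" xs]
  by (simp add: Int_def)

lemma card_cyclic_consecutive_le_1:
  assumes "distinct xs" and "3 \<le> length xs"
  shows "card {i. i < length xs \<and> xs ! i = u \<and> xs ! ((i + 1) mod length xs) = v}
    + card {i. i < length xs \<and> xs ! i = u \<and> xs ! ((i + length xs - 1) mod length xs) = v} \<le> 1"
    (is "card ?S + card ?P \<le> 1")
proof -
  let ?L = "length xs"
  have "?S \<inter> ?P = {}"
  proof (intro equals0I)
    fix i assume "i \<in> ?S \<inter> ?P"
    then have "i < ?L" and "xs ! ((i + 1) mod ?L) = xs ! ((i + ?L - 1) mod ?L)" by auto
    moreover have "(i + 1) mod ?L < ?L" "(i + ?L - 1) mod ?L < ?L"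
      using \<open>i < ?L\<close> by (fact mod_less_divisor[OF le_less_trans[OF le0]])+
    ultimately have "(i + 1) mod ?L = (i + ?L - 1) mod ?L" using nth_eq_iff_index_eq[OF \<open>distinct xs\<close>] by simp
    with cyclic_succ_ne_pred[OF \<open>i < ?L\<close> \<open>3 \<le> ?L\<close>] show False ..
  qed
  moreover have "card (?S \<union> ?P) \<le> card ({u} \<inter> set xs)"
    unfolding card_nth_positions[OF \<open>distinct xs\<close>, symmetric] by (rule card_mono) auto
  moreover have "card ({u} \<inter> set xs) \<le> 1" by (simp add: card_le_Suc0_iff_eq)
  ultimately show ?thesis by (simp add: card_Un_disjoint)
qed

lemma is_ham_cycle_card_le:
  assumes ham: "is_ham_cycle V E cs" and "A \<subseteq> V" and "finite B"
    and exceptional: "\<And>a b. a \<in> A \<Longrightarrow> {a, b} \<in> E \<Longrightarrow> b \<notin> B \<Longrightarrow> a = u \<and> b = v"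
  shows "card A \<le> card B"
proof -
  define L where "L = length cs"
  define succ where "succ i = (i + 1) mod L" for i
  define pred where "pred i = (i + L - 1) mod L" for i
  have dist: "distinct cs" and set_cs: "set cs = V" and "3 \<le> L"
    and edge_succ: "\<And>i. i < L \<Longrightarrow> {cs ! i, cs ! succ i} \<in> E"
    using ham unfolding is_ham_cycle_def L_def succ_def by auto
  have succ_pred: "i < L \<Longrightarrow> succ (pred i) = i" and pred_succ: "i < L \<Longrightarrow> pred (succ i) = i" for i
    unfolding succ_def pred_def by (fact cyclic_succ_pred cyclic_pred_succ)+
  from \<open>3 \<le> L\<close> have succ_lt: "succ i < L" and pred_lt: "pred i < L" for i
    unfolding succ_def pred_def by auto
  have edge_pred: "{cs ! i, cs ! pred i} \<in> E" if "i < L" for i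
    using edge_succ[OF pred_lt[of i]] succ_pred[OF that] by (simp add: insert_commute)
  define I where "I = {i. i < L \<and> cs ! i \<in> A}"
  define J where "J = {i. i < L \<and> cs ! i \<in> B}"
  have card_A: "card A = card I"
    using card_nth_positions[OF dist, of A] \<open>A \<subseteq> V\<close> set_cs unfolding I_def L_def by (simp add: Int_absorb2)
  have card_J: "card J \<le> card B"
    using card_nth_positions[OF dist, of B] \<open>finite B\<close> unfolding J_def L_def by (simp add: card_mono)
  have "card {i \<in> I. succ i \<notin> J} \<le> card {i. i < L \<and> cs ! i = u \<and> cs ! succ i = v}"
  proof (rule card_mono, simp, rule subsetI)
    fix i assume "i \<in> {i \<in> I. succ i \<notin> J}"
    then have "i < L" "cs ! i \<in> A" "cs ! succ i \<notin> B" using succ_lt by (auto simp: I_def J_def)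
    with exceptional edge_succ show "i \<in> {i. i < L \<and> cs ! i = u \<and> cs ! succ i = v}" by blast
  qed
  moreover have "card {i \<in> I. pred i \<notin> J} \<le> card {i. i < L \<and> cs ! i = u \<and> cs ! pred i = v}"
  proof (rule card_mono, simp, rule subsetI)
    fix i assume "i \<in> {i \<in> I. pred i \<notin> J}"
    then have "i < L" "cs ! i \<in> A" "cs ! pred i \<notin> B" using pred_lt by (auto simp: I_def J_def)
    with exceptional edge_pred show "i \<in> {i. i < L \<and> cs ! i = u \<and> cs ! pred i = v}" by blast
  qed
  moreover have "card {i. i < L \<and> cs ! i = u \<and> cs ! succ i = v}
      + card {i. i < L \<and> cs ! i = u \<and> cs ! pred i = v} \<le> 1"
    using card_cyclic_consecutive_le_1[OF dist \<open>3 \<le> L\<close>[unfolded L_def], of u v]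
    unfolding succ_def pred_def L_def .
  ultimately have "card {i \<in> I. succ i \<notin> J} + card {i \<in> I. pred i \<notin> J} \<le> 1" by linarith
  moreover have "inj_on succ I"
    by (rule inj_on_inverseI[where g = pred]) (simp add: I_def pred_succ)
  moreover have "inj_on pred I"
    by (rule inj_on_inverseI[where g = succ]) (simp add: I_def succ_pred)
  ultimately have "card I \<le> card J"
    by (intro card_le_if_two_injections_almost_into) (auto simp: I_def J_def)
  with card_A card_J show ?thesis by linarith
qed

lemma not_hc_hamiltonian_if_one_even_boundary_edge:
  assumes T: "T \<subseteq> hc_verts n" and "card_par 0 T > card_par 1 T" and "u \<in> T" and "v \<notin> T"
    and boundary: "\<And>a b. a \<in> T \<Longrightarrow> parity a = 0 \<Longrightarrow> b \<in> hc_verts n - T \<Longrightarrow> hc_adj a b \<Longrightarrow>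
      {a, b} \<in> F \<union> {{u, v}}"
  shows "\<not> hc_hamiltonian n F"
proof
  assume "hc_hamiltonian n F"
  then obtain cs where ham: "is_ham_cycle (hc_verts n) (hc_edges n - F) cs"
    unfolding hc_hamiltonian_def by blast
  have exceptional: "a = u \<and> b = v"
    if a: "a \<in> {x \<in> T. parity x = 0}" and ab: "{a, b} \<in> hc_edges n - F"
      and b: "b \<notin> {x \<in> T. parity x = 1}" for a b
  proof -
    have "b \<in> hc_verts n" and adj: "hc_adj a b" using ab by (simp_all add: hc_edge_iff)
    moreover have "parity b = 1" using a parity_hc_adj[OF adj] by simp
    ultimately have "{a, b} = {u, v}" using boundary[of a b] a ab b by auto
    with a \<open>v \<notin> T\<close> show ?thesis by (auto simp: doubleton_eq_iff)
  qed
  have "card {x \<in> T. parity x = 0} \<le> card {x \<in> T. parity x = 1}"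
    by (rule is_ham_cycle_card_le[OF ham _ _ exceptional])
      (use T finite_hc_verts in \<open>auto intro: finite_subset\<close>)
  with \<open>card_par 0 T > card_par 1 T\<close> show False unfolding card_par_def by simp
qed

theorem lemma4:
  fixes n :: nat and F :: "bool list set set" and T :: "bool list set"
  assumes "n \<ge> 3"
    and "F \<subseteq> hc_edges n"
    and "T \<subset> hc_verts n"
    and "card T \<ge> 3"
    and "\<forall>u v. u \<in> T \<and> parity u = 0 \<and> v \<in> hc_verts n - T \<and> hc_adj u v \<longrightarrow> {u, v} \<in> F"
    and "card_par 0 T > card_par 1 T"
  shows "not_minimal n F"
proof -
  have T: "T \<subseteq> hc_verts n" using assms(3) by blast
  obtain u v where uv: "u \<in> T" "parity u = 0" "v \<in> hc_verts n - T" "hc_adj u v"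
    using card_par_le_if_even_vertices_closed[OF _ T] assms(1,6) by fastforce
  then have "{u, v} \<in> F" using assms(5) by blast
  then have "F - {{u, v}} \<subset> F" by blast
  moreover have "\<not> hc_hamiltonian n (F - {{u, v}})"
    using uv assms(5,6) by (intro not_hc_hamiltonian_if_one_even_boundary_edge[OF T]) auto
  ultimately show ?thesis unfolding not_minimal_def by blast
qed

end
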